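(* Let $\bar x \in \mathrm{dom}\,\psi$, let $A>0$, and let $T = T_A(\bar x)$. Then for all $y \in \mathrm{dom}\,\psi$, $$M_A(\bar x, y) \;\geq\; M_A(\bar x) + \tfrac12 \langle \nabla^2 f(\bar x)(y - T), y - T\rangle + \tfrac12 \sigma A \|y - T\|^2 .$$ Moreover, $$\|T_A(\bar x) - \bar x\| \;\leq\; \frac{1}{\sigma A}\, \|F'(\bar x)\|_*,$$ where $F'(\bar x) = \nabla f(\bar x) + \psi'(\bar x)$ and $\psi'(\bar x)$ is an arbitrary element of $\partial\psi(\bar x)$.
   Context: $\mathbb{E}$ is a finite-dimensional real vector space with an arbitrary norm $\|\cdot\|$; $\mathbb{E}^*$ is its dual space with dual norm $\|g\|_* = \max\{\langle g, x\rangle : \|x\|\le 1\}$. We consider $F(x) = f(x) + \psi(x)$, where $\psi$ is a closed convex function with $\mathrm{dom}\,\psi \subseteq \mathbb{E}$ and $f$ is a convex, twice continuously differentiable function. The scaling function $d$ is differentiable and satisfies, for some $\sigma \in (0,1]$ and all $x, y \in \mathrm{dom}\,\psi$: $d(y) \ge d(x) + \langle \nabla d(x), y - x\rangle + \frac{\sigma}{2}\|y-x\|^2$ and $\|\nabla d(x) - \nabla d(y)\|_* \le \|x - y\|$. The Bregman distance is $\rho(x,y) = d(y) - d(x) - \langle \nabla d(x), y - x\rangle$. For $\bar x \in \mathrm{dom}\,\psi$ and $A > 0$ define $$M_A(\bar x, y) = f(\bar x) + \langle \nabla f(\bar x), y - \bar x\rangle + \tfrac12\langle \nabla^2 f(\bar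 x)(y-\bar x), y - \bar x\rangle + A\rho(\bar x, y) + \psi(y),$$ $T_A(\bar x) = \arg\min_{y \in \mathrm{dom}\,\psi} M_A(\bar x, y)$, and $M_A(\bar x) = M_A(\bar x, T_A(\bar x))$. *)

theory Defs
  imports "HOL-Analysis.Analysis"
begin

text \<open>An arbitrary norm on the finite-dimensional real space 'a (not necessarily the
Euclidean one).  The dual space is identified with 'a via the inner product.\<close>
definition is_norm :: "('a::euclidean_space \<Rightarrow> real) \<Rightarrow> bool" where
  "is_norm N \<longleftrightarrow> (\<forall>x. 0 \<le> N x) \<and> (\<forall>x. N x = 0 \<longleftrightarrow> x = 0)
     \<and> (\<forall>c x. N (c *\<^sub>R x) = \<bar>c\<bar> * N x) \<and> (\<forall>x y. N (x + y) \<le> N x + N y)"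

definition dual_norm :: "('a::euclidean_space \<Rightarrow> real) \<Rightarrow> 'a \<Rightarrow> real" where
  "dual_norm N g = Sup {g \<bullet> x | x. N x \<le> 1}"

text \<open>Closed convex function \<open>\<psi>\<close> with effective domain D (value +\<infinity> outside D):
  D convex, \<open>\<psi>\<close> convex on D, epigraph closed.\<close>
definition closed_convex_fun :: "'a::euclidean_space set \<Rightarrow> ('a \<Rightarrow> real) \<Rightarrow> bool" where
  "closed_convex_fun D \<psi> \<longleftrightarrow> convex D \<and> convex_on D \<psi>
     \<and> closed {(x, t). x \<in> D \<and> \<psi> x \<le> t}"

definition subdiff :: "'a::euclidean_space set \<Rightarrow> ('a \<Rightarrow> real) \<Rightarrow> 'a \<Rightarrow> 'a set" where
  "subdiff D \<psi> x = {g. \<forall>y\<in>D. \<psi> y \<ge> \<psi> x + g \<bullet> (y - x)}"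

definition bregman :: "('a::euclidean_space \<Rightarrow> real) \<Rightarrow> ('a \<Rightarrow> 'a) \<Rightarrow> 'a \<Rightarrow> 'a \<Rightarrow> real" where
  "bregman d gd x y = d y - d x - gd x \<bullet> (y - x)"

definition model ::
  "('a::euclidean_space \<Rightarrow> real) \<Rightarrow> ('a \<Rightarrow> 'a) \<Rightarrow> ('a \<Rightarrow> 'a \<Rightarrow>\<^sub>L 'a) \<Rightarrow> ('a \<Rightarrow> real)
    \<Rightarrow> ('a \<Rightarrow> 'a) \<Rightarrow> ('a \<Rightarrow> real) \<Rightarrow> real \<Rightarrow> 'a \<Rightarrow> 'a \<Rightarrow> real" where
  "model f gf H d gd \<psi> A xb y =
     f xb + gf xb \<bullet> (y - xb) + (1/2) * ((H xb) (y - xb) \<bullet> (y - xb))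
     + A * bregman d gd xb y + \<psi> y"

end

theory Submission
  imports Defs
begin

text \<open>Writing \<open>T = T\<^sub>A(xb)\<close> and \<open>v = y - T\<close>, the model is an exact quadratic-plus-Bregman
expansion around \<open>T\<close>: \<open>M(y) = M(T) + \<langle>\<nabla>\<phi>(T), v\<rangle> + 1/2 \<langle>H v, v\<rangle> + A \<rho>(T, y) + \<psi>(y) - \<psi>(T)\<close>,
where \<open>\<phi> = M - \<psi>\<close> is the smooth part (three-point identity of the Bregman distance).
Optimality of \<open>T\<close> makes the linear term plus \<open>\<psi>(y) - \<psi>(T)\<close> nonnegative, and strong convexity
of \<open>d\<close> gives \<open>\<rho>(T, y) \<ge> \<sigma>/2 \<parallel>v\<parallel>\<^sup>2\<close>; this is the growth bound.
Taking \<open>y = xb\<close> in it, bounding \<open>\<rho>(xb, T)\<close> by strong convexity again and \<open>\<psi>(T)\<close> by a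
subgradient at \<open>xb\<close>, and using that the Hessian of the convex \<open>f\<close> is positive semidefinite,
leaves \<open>\<sigma>A \<parallel>T - xb\<parallel>\<^sup>2 \<le> \<langle>F'(xb), xb - T\<rangle> \<le> \<parallel>F'(xb)\<parallel>\<^sub>* \<parallel>T - xb\<parallel>\<close>.\<close>

lemma has_derivative_directional_quotient:
  fixes \<phi> :: "'a::real_normed_vector \<Rightarrow> real"
  assumes "(\<phi> has_derivative \<phi>') (at x)"
  shows "((\<lambda>t. (\<phi> (x + t *\<^sub>R v) - \<phi> x) / t) \<longlongrightarrow> \<phi>' v) (at_right 0)"
proof -
  have "((\<lambda>t. x + t *\<^sub>R v) has_derivative (\<lambda>t. t *\<^sub>R v)) (at 0)"
    by (auto intro!: derivative_eq_intros)
  then have "((\<lambda>t. \<phi> (x + t *\<^sub>R v)) has_derivative (\<lambda>t. \<phi>' (t *\<^sub>R v))) (at 0)"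
    using assms has_derivative_compose by fastforce
  moreover have "(\<lambda>t. \<phi>' (t *\<^sub>R v)) = (*) (\<phi>' v)"
    using linear_scale[OF has_derivative_linear[OF assms]] by (auto simp: fun_eq_iff)
  ultimately have "((\<lambda>t. \<phi> (x + t *\<^sub>R v)) has_field_derivative \<phi>' v) (at 0)"
    by (simp add: has_field_derivative_def)
  then have "((\<lambda>t. (\<phi> (x + t *\<^sub>R v) - \<phi> x) / t) \<longlongrightarrow> \<phi>' v) (at 0)"
    by (simp add: DERIV_def)
  then show ?thesis
    by (rule tendsto_mono[OF at_le, rotated]) simp
qed

lemma has_derivative_directional_lower_bound:
  fixes \<phi> :: "'a::real_normed_vector \<Rightarrow> real"
  assumes "(\<phi> has_derivative \<phi>') (at x)"
    and "\<And>t. 0 < t \<Longrightarrow> t < 1 \<Longrightarrow> c \<le> (\<phi> (x + t *\<^sub>R v) - \<phi> x) / t"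
  shows "c \<le> \<phi>' v"
proof (rule tendsto_lowerbound[OF has_derivative_directional_quotient[OF assms(1)]])
  show "\<forall>\<^sub>F t in at_right 0. c \<le> (\<phi> (x + t *\<^sub>R v) - \<phi> x) / t"
    using eventually_at_right_real[of 0 1] by (rule eventually_mono) (auto intro: assms(2))
qed (simp add: trivial_limit_at_right_real)

lemma convex_on_above_tangent:
  fixes f :: "'a::real_normed_vector \<Rightarrow> real"
  assumes "convex_on UNIV f" and "(f has_derivative f') (at x)"
  shows "f' (y - x) \<le> f y - f x"
proof -
  have "f x - f y \<le> - f' (y - x)"
  proof (rule has_derivative_directional_lower_bound[OF has_derivative_minus[OF assms(2)]])
    fix t :: real assume t: "0 < t" "t < 1"
    have "f (x + t *\<^sub>R (y - x)) \<le> (1 - t) * f x + t * f y"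
      using convex_onD[OF assms(1), of t x y] t by (simp add: algebra_simps)
    then show "f x - f y \<le> (- f (x + t *\<^sub>R (y - x)) - - f x) / t"
      using t by (simp add: le_divide_eq algebra_simps)
  qed
  then show ?thesis by simp
qed

lemma convex_on_hessian_psd:
  fixes f :: "'a::real_inner \<Rightarrow> real"
  assumes "convex_on UNIV f" and "\<And>x. (f has_derivative (\<lambda>h. gf x \<bullet> h)) (at x)"
    and "(gf has_derivative H) (at x)"
  shows "0 \<le> H h \<bullet> h"
proof (rule has_derivative_directional_lower_bound[OF has_derivative_inner_left[OF assms(3)]])
  have monotone: "0 \<le> (gf y - gf z) \<bullet> (y - z)" for y z
    using convex_on_above_tangent[OF assms(1) assms(2), of y z]
      convex_on_above_tangent[OF assms(1) assms(2), of z y]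
    by (simp add: inner_diff_left inner_diff_right)
  fix t :: real assume "0 < t"
  then show "0 \<le> (gf (x + t *\<^sub>R h) \<bullet> h - gf x \<bullet> h) / t"
    using monotone[of "x + t *\<^sub>R h" x] by (simp add: inner_diff_left zero_le_mult_iff)
qed

lemma first_order_optimality_smooth_plus_convex:
  fixes \<phi> \<psi> :: "'a::real_normed_vector \<Rightarrow> real"
  assumes "convex D" "convex_on D \<psi>" "(\<phi> has_derivative \<phi>') (at x)" "x \<in> D"
    and min: "\<And>z. z \<in> D \<Longrightarrow> \<phi> x + \<psi> x \<le> \<phi> z + \<psi> z" and "y \<in> D"
  shows "\<psi> x - \<psi> y \<le> \<phi>' (y - x)"
proof (rule has_derivative_directional_lower_bound[OF assms(3)])
  fix t :: real assume t: "0 < t" "t < 1"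
  have z: "x + t *\<^sub>R (y - x) = (1 - t) *\<^sub>R x + t *\<^sub>R y" by (simp add: algebra_simps)
  have "x + t *\<^sub>R (y - x) \<in> D"
    unfolding z using t assms(4,6) by (intro convexD[OF assms(1)]) auto
  moreover have "\<psi> (x + t *\<^sub>R (y - x)) \<le> (1 - t) * \<psi> x + t * \<psi> y"
    unfolding z using t assms(4,6) by (intro convex_onD[OF assms(2)]) auto
  ultimately have "t * (\<psi> x - \<psi> y) \<le> \<phi> (x + t *\<^sub>R (y - x)) - \<phi> x"
    using min[of "x + t *\<^sub>R (y - x)"] by (simp add: algebra_simps)
  then show "\<psi> x - \<psi> y \<le> (\<phi> (x + t *\<^sub>R (y - x)) - \<phi> x) / t"
    using t by (simp add: le_divide_eq mult.commute)
qed

lemma is_norm_zero: "is_norm N \<Longrightarrow> N 0 = 0"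
  unfolding is_norm_def by blast

lemma is_norm_minus: "is_norm N \<Longrightarrow> N (- x) = N x"
  using is_norm_def[of N] by (metis abs_minus_cancel abs_one mult_1 scaleR_minus1_left)

lemma is_norm_ge_scaled_norm:
  fixes N :: "'a::euclidean_space \<Rightarrow> real"
  assumes N: "is_norm N"
  obtains c where "c > 0" "\<And>x. c * norm x \<le> N x"
proof -
  have hom: "N (c *\<^sub>R x) = \<bar>c\<bar> * N x" and tri: "N (x + y) \<le> N x + N y"
    and pos: "N x = 0 \<longleftrightarrow> x = 0" and nn: "0 \<le> N x" for c x y
    using N unfolding is_norm_def by auto
  have "convex_on UNIV N"
  proof (rule convex_onI)
    fix t :: real and x y :: 'a assume "0 < t" "t < 1"
    then show "N ((1 - t) *\<^sub>R x + t *\<^sub>R y) \<le> (1 - t) * N x + t * N y"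
      using tri[of "(1 - t) *\<^sub>R x" "t *\<^sub>R y"] by (simp add: hom)
  qed simp
  then have "continuous_on (sphere 0 1) N"
    by (intro continuous_on_subset[OF convex_on_continuous]) auto
  moreover obtain b :: 'a where "b \<in> Basis" using nonempty_Basis by blast
  then have "sphere (0::'a) 1 \<noteq> {}" by (metis norm_Basis mem_sphere_0 empty_iff)
  ultimately obtain x0 where x0: "x0 \<in> sphere (0::'a) 1" "\<And>y. y \<in> sphere 0 1 \<Longrightarrow> N x0 \<le> N y"
    using continuous_attains_inf[OF compact_sphere] by metis
  have "N x0 * norm x \<le> N x" for x
  proof (cases "x = 0")
    case False
    then have "N x0 \<le> N ((1 / norm x) *\<^sub>R x)" by (intro x0(2)) simp
    then show ?thesis using False by (simp add: hom field_simps)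
  qed (simp add: nn)
  moreover have "N x0 > 0" using x0(1) pos[of x0] nn[of x0] by fastforce
  ultimately show thesis using that by blast
qed

lemma bdd_above_dual_norm_set:
  fixes N :: "'a::euclidean_space \<Rightarrow> real"
  assumes "is_norm N"
  shows "bdd_above {G \<bullet> x | x. N x \<le> 1}"
proof -
  obtain c where c: "c > 0" "\<And>x. c * norm x \<le> N x"
    using is_norm_ge_scaled_norm[OF assms] by blast
  have "G \<bullet> x \<le> norm G * (1 / c)" if "N x \<le> 1" for x
  proof -
    have "norm x \<le> 1 / c"
      using c(1) order_trans[OF c(2) that] by (simp add: pos_le_divide_eq mult.commute)
    then show ?thesis
      using norm_cauchy_schwarz[of G x] by (meson mult_left_mono norm_ge_zero order_trans)
  qed
  then show ?thesis by (intro bdd_aboveI) blast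
qed

lemma dual_norm_upper:
  fixes N :: "'a::euclidean_space \<Rightarrow> real"
  assumes "is_norm N" and "N x \<le> 1"
  shows "G \<bullet> x \<le> dual_norm N G"
  unfolding dual_norm_def using assms(2)
  by (intro cSup_upper[OF _ bdd_above_dual_norm_set[OF assms(1)]]) blast

lemma dual_norm_nonneg:
  fixes N :: "'a::euclidean_space \<Rightarrow> real"
  shows "is_norm N \<Longrightarrow> 0 \<le> dual_norm N G"
  using dual_norm_upper[of N 0 G] by (simp add: is_norm_zero)

lemma inner_le_dual_norm:
  fixes N :: "'a::euclidean_space \<Rightarrow> real"
  assumes N: "is_norm N"
  shows "G \<bullet> x \<le> dual_norm N G * N x"
proof (cases "x = 0")
  case True
  then show ?thesis using N by (simp add: is_norm_zero)
next
  case False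
  then have "N x > 0" using N by (simp add: is_norm_def less_le)
  moreover have "G \<bullet> ((1 / N x) *\<^sub>R x) \<le> dual_norm N G"
    using \<open>N x > 0\<close> N by (intro dual_norm_upper) (simp_all add: is_norm_def)
  ultimately show ?thesis by (simp add: field_simps)
qed

definition model_deriv ::
  "('a::euclidean_space \<Rightarrow> 'a) \<Rightarrow> ('a \<Rightarrow> 'a \<Rightarrow>\<^sub>L 'a) \<Rightarrow> ('a \<Rightarrow> 'a) \<Rightarrow> real \<Rightarrow> 'a \<Rightarrow> 'a \<Rightarrow> 'a \<Rightarrow> real"
  where "model_deriv gf H gd A xb z v =
    gf xb \<bullet> v + (1/2) * (H xb (z - xb) \<bullet> v + H xb v \<bullet> (z - xb)) + A * ((gd z - gd xb) \<bullet> v)"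

lemma model_eq_smooth_plus:
  "model f gf H d gd \<psi> A xb y = model f gf H d gd (\<lambda>_. 0) A xb y + \<psi> y"
  by (simp add: model_def)

lemma has_derivative_model_smooth:
  assumes "(d has_derivative (\<lambda>h. gd z \<bullet> h)) (at z)"
  shows "(model f gf H d gd (\<lambda>_. 0) A xb has_derivative model_deriv gf H gd A xb z) (at z)"
proof -
  have "((\<lambda>y. H xb (y - xb) \<bullet> (y - xb)) has_derivative
      (\<lambda>v. H xb v \<bullet> (z - xb) + H xb (z - xb) \<bullet> v)) (at z)"
    by (auto intro!: derivative_eq_intros bounded_linear.has_derivative[OF blinfun.bounded_linear_right])
  then show ?thesis
    unfolding model_def bregman_def model_deriv_def [abs_def]
    by (auto intro!: derivative_eq_intros assms simp: inner_diff_left algebra_simps)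
qed

lemma model_expansion:
  "model f gf H d gd \<psi> A xb y = model f gf H d gd \<psi> A xb z + model_deriv gf H gd A xb z (y - z)
     + (1/2) * (H xb (y - z) \<bullet> (y - z)) + A * bregman d gd z y + \<psi> y - \<psi> z"
proof -
  have "y - xb = (z - xb) + (y - z)" by simp
  then have "H xb (y - xb) \<bullet> (y - xb) = H xb (z - xb) \<bullet> (z - xb)
      + (H xb (z - xb) \<bullet> (y - z) + H xb (y - z) \<bullet> (z - xb)) + H xb (y - z) \<bullet> (y - z)"
    by (metis blinfun.add_right inner_add_left inner_add_right add.assoc)
  then show ?thesis
    by (simp add: model_def model_deriv_def bregman_def inner_diff_left inner_diff_right algebra_simps)
qed

lemma model_growth:
  assumes "convex D" "convex_on D \<psi>" "(d has_derivative (\<lambda>h. gd T \<bullet> h)) (at T)" "A \<ge> 0"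
    and "T \<in> D" "\<And>z. z \<in> D \<Longrightarrow> model f gf H d gd \<psi> A xb T \<le> model f gf H d gd \<psi> A xb z"
    and "y \<in> D" "d y \<ge> d T + gd T \<bullet> (y - T) + \<sigma> / 2 * (N (y - T))\<^sup>2"
  shows "model f gf H d gd \<psi> A xb y \<ge> model f gf H d gd \<psi> A xb T
           + (1/2) * (H xb (y - T) \<bullet> (y - T)) + (1/2) * \<sigma> * A * (N (y - T))\<^sup>2"
proof -
  have "\<psi> T - \<psi> y \<le> model_deriv gf H gd A xb T (y - T)"
    using assms(1,2,5,6,7)
    by (intro first_order_optimality_smooth_plus_convex[OF _ _ has_derivative_model_smooth[of d gd T, OF assms(3)]])
      (auto simp flip: model_eq_smooth_plus)
  moreover have "A * (\<sigma> / 2 * (N (y - T))\<^sup>2) \<le> A * bregman d gd T y"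
    using assms(4,8) by (intro mult_left_mono) (simp_all add: bregman_def)
  ultimately show ?thesis
    unfolding model_expansion[of _ _ _ _ _ _ _ _ y T] by (simp add: algebra_simps)
qed

lemma model_step_bound:
  fixes H :: "'a::euclidean_space \<Rightarrow> 'a \<Rightarrow>\<^sub>L 'a"
  assumes N: "is_norm N" and "0 < \<sigma>" "0 < A"
    and H_psd: "\<And>h. 0 \<le> H xb h \<bullet> h"
    and growth: "model f gf H d gd \<psi> A xb xb \<ge> model f gf H d gd \<psi> A xb T
           + (1/2) * (H xb (xb - T) \<bullet> (xb - T)) + (1/2) * \<sigma> * A * (N (xb - T))\<^sup>2"
    and strong: "d T \<ge> d xb + gd xb \<bullet> (T - xb) + \<sigma> / 2 * (N (T - xb))\<^sup>2"
    and "T \<in> D" "g \<in> subdiff D \<psi> xb"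
  shows "N (T - xb) \<le> 1 / (\<sigma> * A) * dual_norm N (gf xb + g)"
proof -
  define a where "a = T - xb"
  define G where "G = gf xb + g"
  have "xb - T = - a" by (simp add: a_def)
  then have growth_a: "model f gf H d gd \<psi> A xb xb \<ge> model f gf H d gd \<psi> A xb T
      + (1/2) * (H xb a \<bullet> a) + (1/2) * \<sigma> * A * (N a)\<^sup>2"
    using growth is_norm_minus[OF N] by (simp add: blinfun.minus_right)
  have "\<psi> T \<ge> \<psi> xb + g \<bullet> a" using assms(7,8) by (simp add: subdiff_def a_def)
  moreover have "A * (\<sigma> / 2 * (N a)\<^sup>2) \<le> A * bregman d gd xb T"
    using strong \<open>0 < A\<close> by (intro mult_left_mono) (simp_all add: bregman_def a_def)
  ultimately have "\<sigma> * A * (N a)\<^sup>2 \<le> G \<bullet> (- a) - H xb a \<bullet> a"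
    using growth_a by (simp add: model_def bregman_def G_def a_def inner_add_left algebra_simps)
  also have "\<dots> \<le> dual_norm N G * N a"
    using inner_le_dual_norm[OF N, of G "- a"] H_psd[of a] is_norm_minus[OF N] by simp
  finally have key: "(\<sigma> * A * N a) * N a \<le> dual_norm N G * N a"
    by (simp add: power2_eq_square mult.assoc)
  have "\<sigma> * A * N a \<le> dual_norm N G"
  proof (cases "N a = 0")
    case True
    then show ?thesis using dual_norm_nonneg[OF N] by simp
  next
    case False
    then show ?thesis using key N by (simp add: is_norm_def less_le)
  qed
  then show ?thesis
    using \<open>0 < \<sigma>\<close> \<open>0 < A\<close> by (simp add: a_def G_def field_simps)
qed

theorem lemma1:
  fixes N :: "'a::euclidean_space \<Rightarrow> real"
    and f d \<psi> :: "'a \<Rightarrow> real"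
    and gf gd :: "'a \<Rightarrow> 'a"
    and H :: "'a \<Rightarrow> 'a \<Rightarrow>\<^sub>L 'a"
    and D :: "'a set"
    and \<sigma> A :: real
    and xb T :: 'a
  assumes N: "is_norm N"
    and psi: "closed_convex_fun D \<psi>"
    and f_convex: "convex_on UNIV f"
    and f_grad: "\<And>x. (f has_derivative (\<lambda>h. gf x \<bullet> h)) (at x)"
    and f_hess: "\<And>x. (gf has_derivative (\<lambda>h. H x h)) (at x)"
    and H_cont: "continuous_on UNIV H"
    and d_grad: "\<And>x. (d has_derivative (\<lambda>h. gd x \<bullet> h)) (at x)"
    and sigma: "0 < \<sigma>" "\<sigma> \<le> 1"
    and d_strong: "\<And>x y. x \<in> D \<Longrightarrow> y \<in> D \<Longrightarrow>
                     d y \<ge> d x + gd x \<bullet> (y - x) + \<sigma> / 2 * (N (y - x))\<^sup>2"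
    and d_lip: "\<And>x y. x \<in> D \<Longrightarrow> y \<in> D \<Longrightarrow> dual_norm N (gd x - gd y) \<le> N (x - y)"
    and xb: "xb \<in> D"
    and A: "A > 0"
    and T_min: "T \<in> D" "\<And>y. y \<in> D \<Longrightarrow> model f gf H d gd \<psi> A xb T \<le> model f gf H d gd \<psi> A xb y"
  shows "(\<forall>y\<in>D. model f gf H d gd \<psi> A xb y \<ge> model f gf H d gd \<psi> A xb T
              + (1/2) * ((H xb) (y - T) \<bullet> (y - T)) + (1/2) * \<sigma> * A * (N (y - T))\<^sup>2)
         \<and> (\<forall>g\<in>subdiff D \<psi> xb. N (T - xb) \<le> 1 / (\<sigma> * A) * dual_norm N (gf xb + g))"
proof -
  have D: "convex D" "convex_on D \<psi>"
    using psi by (simp_all add: closed_convex_fun_def)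
  have growth: "model f gf H d gd \<psi> A xb y \<ge> model f gf H d gd \<psi> A xb T
      + (1/2) * (H xb (y - T) \<bullet> (y - T)) + (1/2) * \<sigma> * A * (N (y - T))\<^sup>2" if "y \<in> D" for y
    using D d_grad A T_min that d_strong[OF T_min(1) that] by (intro model_growth) auto
  have H_psd: "0 \<le> H xb h \<bullet> h" for h
    using f_hess by (rule convex_on_hessian_psd[OF f_convex f_grad])
  show ?thesis
    using growth model_step_bound[OF N sigma(1) A H_psd growth[OF xb] d_strong[OF xb T_min(1)] T_min(1)]
    by blast
qed

end
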